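(* Let $A,B$ be quantum systems of dimensions $m_A,m_B$ and $\psi_{AB}$ a bipartite state with $\psi_A=\mathrm{id}_{m_A}/m_A$ and $\psi_B=\mathrm{id}_{m_B}/m_B$, and let $\mathcal{T}:\mathcal{M}(B)\to\mathcal{M}(A)$ be its Markov super-operator. For any $Q\in\mathcal{M}(B)$, the maximum $$\max\{|\mathrm{Tr}((P^\dagger\otimes Q)\psi_{AB})|: P\in\mathcal{M}(A),\ \|P\|'_2=1\}$$ equals $\|\mathcal{T}(Q)\|'_2$, and (when $\mathcal{T}(Q)\ne0$) it is achieved by $P^*=\mathcal{T}(Q)/\|\mathcal{T}(Q)\|'_2$. Consequently $$\rho(\psi_{AB})=\max\{\|\mathcal{T}(Q)\|'_2: Q\in\mathcal{M}(B),\ \mathrm{Tr}Q=0,\ \|Q\|'_2=1\}.$$ Moreover, the supremum defining $\rho(\psi_{AB})$ is achieved by a pair of Hermitian operators $(P,Q)$.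
   Context: $\mathcal{M}(A)$ is the space of linear operators on $A\cong\mathbb{C}^{m_A}$, with inner product $\langle X,Y\rangle=\frac1{m_A}\mathrm{Tr}X^\dagger Y$ and normalized 2-norm $\|X\|'_2=\langle X,X\rangle^{1/2}$ (similarly on $B$ with $1/m_B$). The Markov super-operator $\mathcal{T}:\mathcal{M}(B)\to\mathcal{M}(A)$ is defined by $\mathrm{Tr}((M^\dagger\otimes Q)\psi_{AB})=\langle M,\mathcal{T}(Q)\rangle$ for all $M\in\mathcal{M}(A)$, $Q\in\mathcal{M}(B)$ (equivalently $\mathcal{T}(Q)=m_A\mathrm{Tr}_B((\mathrm{id}\otimes Q)\psi_{AB})$). The maximal correlation is $\rho(\psi_{AB})=\sup\{|\mathrm{Tr}((P^\dagger\otimes Q)\psi_{AB})|: P\in\mathcal{M}(A),Q\in\mathcal{M}(B),\ \mathrm{Tr}P=\mathrm{Tr}Q=0,\ \|P\|'_2=\|Q\|'_2=1\}$. *)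

theory Defs
  imports Complex_Main "HOL-Library.Cardinality"
begin

text \<open>Linear operators on a finite-dimensional system with basis indexed by the
finite type 'a (so the dimension is CARD('a)) are represented by their
matrices, i.e. functions 'a => 'a => complex.  A bipartite system A tensor B
has basis indexed by 'a \<times> 'b.\<close>

type_synonym 'a qop = "'a \<Rightarrow> 'a \<Rightarrow> complex"

definition qadj :: "'a qop \<Rightarrow> 'a qop" where
  "qadj X = (\<lambda>i k. cnj (X k i))"

definition qmult :: "('a::finite) qop \<Rightarrow> 'a qop \<Rightarrow> 'a qop" where
  "qmult X Y = (\<lambda>i k. \<Sum>j\<in>UNIV. X i j * Y j k)"

definition qtr :: "('a::finite) qop \<Rightarrow> complex" where
  "qtr X = (\<Sum>i\<in>UNIV. X i i)"

definition qid :: "'a qop" where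
  "qid = (\<lambda>i k. if i = k then 1 else 0)"

definition qtensor :: "'a qop \<Rightarrow> 'b qop \<Rightarrow> ('a \<times> 'b) qop" where
  "qtensor P Q = (\<lambda>(i, j) (k, l). P i k * Q j l)"

definition qscale :: "complex \<Rightarrow> 'a qop \<Rightarrow> 'a qop" where
  "qscale c X = (\<lambda>i k. c * X i k)"

definition qhermitian :: "'a qop \<Rightarrow> bool" where
  "qhermitian X \<longleftrightarrow> qadj X = X"

definition qinner :: "('a::finite) qop \<Rightarrow> 'a qop \<Rightarrow> complex" where
  "qinner X Y = qtr (qmult (qadj X) Y) / of_nat CARD('a)"

definition qnorm2 :: "('a::finite) qop \<Rightarrow> real" where
  "qnorm2 X = sqrt (Re (qinner X X))"

definition qstate :: "('a::finite) qop \<Rightarrow> bool" where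
  "qstate \<psi> \<longleftrightarrow>
     (\<forall>v :: 'a \<Rightarrow> complex.
        Im (\<Sum>x\<in>UNIV. \<Sum>y\<in>UNIV. cnj (v x) * \<psi> x y * v y) = 0 \<and>
        Re (\<Sum>x\<in>UNIV. \<Sum>y\<in>UNIV. cnj (v x) * \<psi> x y * v y) \<ge> 0)
     \<and> qtr \<psi> = 1"

definition ptrace_B :: "('a::finite \<times> 'b::finite) qop \<Rightarrow> 'a qop" where
  "ptrace_B \<psi> = (\<lambda>i k. \<Sum>j\<in>UNIV. \<psi> (i, j) (k, j))"

definition ptrace_A :: "('a::finite \<times> 'b::finite) qop \<Rightarrow> 'b qop" where
  "ptrace_A \<psi> = (\<lambda>j l. \<Sum>i\<in>UNIV. \<psi> (i, j) (i, l))"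

definition markov :: "('a::finite \<times> 'b::finite) qop \<Rightarrow> 'b qop \<Rightarrow> 'a qop" where
  "markov \<psi> Q = qscale (of_nat CARD('a)) (ptrace_B (qmult (qtensor qid Q) \<psi>))"

definition qcorr :: "('a::finite \<times> 'b::finite) qop \<Rightarrow> 'a qop \<Rightarrow> 'b qop \<Rightarrow> complex" where
  "qcorr \<psi> P Q = qtr (qmult (qtensor (qadj P) Q) \<psi>)"

definition maxcorr :: "('a::finite \<times> 'b::finite) qop \<Rightarrow> real" where
  "maxcorr \<psi> = Sup {cmod (qcorr \<psi> P Q) | P Q.
       qtr P = 0 \<and> qtr Q = 0 \<and> qnorm2 P = 1 \<and> qnorm2 Q = 1}"

definition is_max :: "real \<Rightarrow> real set \<Rightarrow> bool" where
  "is_max x S \<longleftrightarrow> x \<in> S \<and> (\<forall>y\<in>S. y \<le> x)"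

end

(* Since Tr((P^dagger tensor Q) psi) = <P, T(Q)>, the first claim is the Cauchy-Schwarz
   inequality, with equality at P = T(Q) / ||T(Q)||.  Because psi_B is maximally mixed, T maps
   traceless operators to traceless ones, so rho(psi) is the maximum of ||T(Q)|| over traceless
   unit Q, which is attained by compactness.  For Hermitian optimizers, rotate a maximizing pair
   (P, Q) by a phase so that its correlation is the real number rho and split P = P1 + i P2,
   Q = Q1 + i Q2 into Hermitian parts.  As psi is Hermitian,
     rho = Re c(P1, Q1) + Re c(P2, Q2) <= rho (||P1|| ||Q1|| + ||P2|| ||Q2||) <= rho,
   so equality holds throughout and one of the normalized pairs (Pk, Qk) attains rho. *)

theory Submission
  imports Defs "HOL-Analysis.Analysis"
begin

lemma sum_UNIV_pair:
  "(\<Sum>x\<in>(UNIV::('a::finite \<times> 'b::finite) set). f x) = (\<Sum>a\<in>UNIV. \<Sum>b\<in>UNIV. f (a, b))"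
  by (simp add: sum.cartesian_product UNIV_Times_UNIV[symmetric] del: UNIV_Times_UNIV)

lemma cnj_mult_self: "cnj z * z = of_real ((cmod z)\<^sup>2)"
  using complex_norm_square[of z] by (simp add: mult.commute)

lemma qinner_expand:
  fixes X :: "'a::finite qop"
  shows "qinner X Y = (\<Sum>k\<in>UNIV. \<Sum>i\<in>UNIV. cnj (X i k) * Y i k) / of_nat CARD('a)"
  unfolding qinner_def qtr_def qmult_def qadj_def by simp

lemma qmult_qtensor_qid:
  fixes \<psi> :: "('a::finite \<times> 'b::finite) qop"
  shows "qmult (qtensor qid Q) \<psi> (i, j) (k, l) = (\<Sum>j'\<in>UNIV. Q j j' * \<psi> (i, j') (k, l))"
  unfolding qmult_def qtensor_def qid_def
  by (simp add: sum_UNIV_pair mult.assoc of_bool_def[symmetric] sum_distrib_left[symmetric])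

lemma qcorr_expand:
  fixes \<psi> :: "('a::finite \<times> 'b::finite) qop"
  shows "qcorr \<psi> P Q
    = (\<Sum>k\<in>UNIV. \<Sum>l\<in>UNIV. \<Sum>i\<in>UNIV. \<Sum>j\<in>UNIV. cnj (P i k) * Q l j * \<psi> (i, j) (k, l))"
  by (simp add: qcorr_def qtr_def qmult_def qtensor_def qadj_def sum_UNIV_pair sum_distrib_right)

lemma qinner_qscale_left: "qinner (qscale c X) Y = cnj c * qinner X Y"
  unfolding qinner_expand qscale_def by (simp add: sum_distrib_left mult_ac)

lemma qinner_qscale_right: "qinner X (qscale c Y) = c * qinner X Y"
  unfolding qinner_expand qscale_def by (simp add: sum_distrib_left mult_ac)

lemma qcorr_eq_qinner_markov:
  fixes \<psi> :: "('a::finite \<times> 'b::finite) qop"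
  shows "qcorr \<psi> P Q = qinner P (markov \<psi> Q)"
proof -
  have "qcorr \<psi> P Q
      = (\<Sum>k\<in>UNIV. \<Sum>i\<in>UNIV. \<Sum>l\<in>UNIV. \<Sum>j\<in>UNIV. cnj (P i k) * Q l j * \<psi> (i, j) (k, l))"
    unfolding qcorr_expand by (rule sum.cong[OF refl], rule sum.swap)
  also have "\<dots> = qinner P (markov \<psi> Q)"
    unfolding markov_def qinner_qscale_right
    by (simp add: qinner_expand ptrace_B_def qmult_qtensor_qid) (simp add: sum_distrib_left mult.assoc)
  finally show ?thesis .
qed

lemma qnorm2_eq_L2_set:
  fixes X :: "'a::finite qop"
  shows "qnorm2 X = L2_set (\<lambda>(i, k). cmod (X i k)) UNIV / sqrt CARD('a)"
proof -
  have "qinner X X = of_real ((\<Sum>(i, k)\<in>UNIV. (cmod (X i k))\<^sup>2) / CARD('a))"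
    by (simp add: qinner_expand sum_UNIV_pair cnj_mult_self)
      (subst sum.swap, simp)
  then show ?thesis
    by (simp add: qnorm2_def L2_set_def real_sqrt_divide case_prod_unfold)
qed

lemma qnorm2_squared:
  fixes X :: "'a::finite qop"
  shows "(qnorm2 X)\<^sup>2 = (\<Sum>(i, k)\<in>UNIV. (cmod (X i k))\<^sup>2) / CARD('a)"
  by (simp add: qnorm2_eq_L2_set L2_set_def power_divide sum_nonneg case_prod_unfold)

lemma qnorm2_nonneg: "qnorm2 X \<ge> 0"
  by (simp add: qnorm2_eq_L2_set)

lemma qnorm2_eq_0_iff: "qnorm2 X = 0 \<longleftrightarrow> X = (\<lambda>_ _. 0)"
  by (auto simp: qnorm2_eq_L2_set L2_set_eq_0_iff fun_eq_iff)

lemma qnorm2_zero [simp]: "qnorm2 (\<lambda>_ _. 0) = 0"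
  by (simp add: qnorm2_eq_0_iff)

lemma qnorm2_pos_iff: "qnorm2 X > 0 \<longleftrightarrow> X \<noteq> (\<lambda>_ _. 0)"
  using qnorm2_nonneg[of X] qnorm2_eq_0_iff[of X] by linarith

lemma qnorm2_qscale: "qnorm2 (qscale c X) = cmod c * qnorm2 X"
  by (simp add: qnorm2_eq_L2_set qscale_def norm_mult L2_set_right_distrib case_prod_unfold)

lemma qinner_self: "qinner X X = of_real ((qnorm2 X)\<^sup>2)"
  by (simp add: qinner_expand qnorm2_squared sum_UNIV_pair cnj_mult_self)
    (subst sum.swap, simp)

lemma qinner_cauchy_schwarz:
  fixes X :: "'a::finite qop"
  shows "cmod (qinner X Y) \<le> qnorm2 X * qnorm2 Y"
proof -
  let ?x = "\<lambda>(i, k). cmod (X i k)" and ?y = "\<lambda>(i, k). cmod (Y i k)"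
  have "cmod (\<Sum>k\<in>UNIV. \<Sum>i\<in>UNIV. cnj (X i k) * Y i k) \<le> (\<Sum>p\<in>UNIV. \<bar>?x p\<bar> * \<bar>?y p\<bar>)"
    by (subst sum.swap) (auto simp: sum_UNIV_pair norm_mult intro!: order_trans[OF norm_sum] sum_mono)
  also have "\<dots> \<le> L2_set ?x UNIV * L2_set ?y UNIV"
    by (rule L2_set_mult_ineq)
  finally show ?thesis
    by (simp add: qinner_expand qnorm2_eq_L2_set norm_divide divide_right_mono)
qed

lemma qnorm2_qid: "qnorm2 (qid :: 'a::finite qop) = 1"
proof -
  have "qmult (qadj qid) qid = (qid :: 'a qop)"
    by (simp add: fun_eq_iff qmult_def qadj_def qid_def of_bool_def[symmetric])
  moreover have "qtr (qid :: 'a qop) = of_nat CARD('a)"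
    by (simp add: qtr_def qid_def)
  ultimately show ?thesis
    by (simp add: qnorm2_def qinner_def)
qed

lemma markov_qscale: "markov \<psi> (qscale c Q) = qscale c (markov \<psi> Q)"
  by (simp add: markov_def ptrace_B_def qmult_qtensor_qid qscale_def sum_distrib_left mult_ac)

lemma qcorr_qscale_left: "qcorr \<psi> (qscale a P) Q = cnj a * qcorr \<psi> P Q"
  by (simp add: qcorr_eq_qinner_markov qinner_qscale_left)

lemma qcorr_qscale_right: "qcorr \<psi> P (qscale b Q) = b * qcorr \<psi> P Q"
  by (simp add: qcorr_eq_qinner_markov markov_qscale qinner_qscale_right)

lemma qtr_qscale: "qtr (qscale c X) = c * qtr X"
  by (simp add: qtr_def qscale_def sum_distrib_left)

abbreviation qnormalize :: "('a::finite) qop \<Rightarrow> 'a qop" where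
  "qnormalize X \<equiv> qscale (1 / complex_of_real (qnorm2 X)) X"

lemma qnorm2_qnormalize: "X \<noteq> (\<lambda>_ _. 0) \<Longrightarrow> qnorm2 (qnormalize X) = 1"
  by (simp add: qnorm2_qscale norm_divide qnorm2_eq_0_iff qnorm2_nonneg)

lemma qinner_qnormalize_self: "qinner (qnormalize X) X = of_real (qnorm2 X)"
  by (simp add: qinner_qscale_left qinner_self power2_eq_square)

lemma qhermitian_qnormalize: "qhermitian X \<Longrightarrow> qhermitian (qnormalize X)"
  unfolding qhermitian_def qadj_def qscale_def by (auto simp: fun_eq_iff dest: fun_cong)

lemma cmod_qcorr_qnormalize:
  "cmod (qcorr \<psi> (qnormalize P) (qnormalize Q)) = cmod (qcorr \<psi> P Q) / (qnorm2 P * qnorm2 Q)"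
  by (simp add: qcorr_qscale_left qcorr_qscale_right norm_mult norm_divide qnorm2_nonneg)

lemma qtr_markov:
  fixes \<psi> :: "('a::finite \<times> 'b::finite) qop"
  shows "qtr (markov \<psi> Q) = of_nat CARD('a) * qtr (qmult Q (ptrace_A \<psi>))"
proof -
  have "qtr (markov \<psi> Q) = of_nat CARD('a) * (\<Sum>i\<in>UNIV. \<Sum>j\<in>UNIV. \<Sum>l\<in>UNIV. Q j l * \<psi> (i, l) (i, j))"
    by (simp add: markov_def qtr_def qscale_def ptrace_B_def qmult_qtensor_qid sum_distrib_left)
  also have "\<dots> = of_nat CARD('a) * (\<Sum>j\<in>UNIV. \<Sum>l\<in>UNIV. \<Sum>i\<in>UNIV. Q j l * \<psi> (i, l) (i, j))"
    by (subst sum.swap, subst (2) sum.swap) (rule refl)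
  finally show ?thesis
    by (simp add: qtr_def qmult_def ptrace_A_def sum_distrib_left)
qed

lemma qtr_markov_eq_0:
  assumes "ptrace_A \<psi> = qscale c qid" and "qtr Q = 0"
  shows "qtr (markov \<psi> Q) = 0"
proof -
  have "qmult Q (qscale c qid) = qscale c Q"
    by (simp add: fun_eq_iff qmult_def qscale_def qid_def if_distrib cong: if_cong)
  then show ?thesis
    using assms by (simp add: qtr_markov qtr_qscale)
qed

lemma exists_traceless_hermitian_unit:
  assumes "CARD('a::finite) \<ge> 2"
  shows "\<exists>P :: 'a qop. qhermitian P \<and> qtr P = 0 \<and> qnorm2 P = 1"
proof -
  have "\<not> CARD('a) \<le> Suc 0"
    using assms by simp
  then obtain a b :: 'a where "a \<noteq> b"
    by (auto simp: card_le_Suc0_iff_eq)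
  define s where "s = sqrt (CARD('a) / 2)"
  define P :: "'a qop" where
    "P = (\<lambda>i k. if i = k \<and> i = a then s else if i = k \<and> i = b then - s else 0)"
  have "qhermitian P"
    by (auto simp: qhermitian_def qadj_def P_def fun_eq_iff)
  moreover have "qtr P = 0"
    using \<open>a \<noteq> b\<close> by (simp add: qtr_def P_def if_distrib[of of_real] sum.If_cases)
  moreover have "qnorm2 P = 1"
  proof -
    have "(\<lambda>(i, k). (cmod (P i k))\<^sup>2)
        = (\<lambda>p. (if p = (a, a) then s\<^sup>2 else 0) + (if p = (b, b) then s\<^sup>2 else 0))"
      using \<open>a \<noteq> b\<close> by (auto simp: P_def fun_eq_iff)
    then have "(qnorm2 P)\<^sup>2 = 1"
      by (simp add: qnorm2_squared sum.distrib s_def)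
    then show ?thesis
      using qnorm2_nonneg[of P] by (auto simp: power2_eq_1_iff)
  qed
  ultimately show ?thesis
    by blast
qed

lemma sum_two_point:
  fixes f :: "'a::finite \<Rightarrow> complex"
  shows "(\<Sum>y\<in>UNIV. f y * (of_bool (y = a) + c * of_bool (y = b))) = f a + c * f b"
  by (simp add: distrib_left sum.distrib mult.left_commute[of _ c] sum_distrib_left[symmetric])

lemma qform_two_point:
  fixes \<psi> :: "'a::finite qop" and a b :: 'a and c :: complex
  defines "v \<equiv> \<lambda>z. of_bool (z = a) + c * of_bool (z = b)"
  shows "(\<Sum>x\<in>UNIV. \<Sum>y\<in>UNIV. cnj (v x) * \<psi> x y * v y)
    = \<psi> a a + c * \<psi> a b + cnj c * (\<psi> b a + c * \<psi> b b)"
proof -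
  have cnj_v: "cnj (v x) = of_bool (x = a) + cnj c * of_bool (x = b)" for x
    by (simp add: v_def)
  have "(\<Sum>x\<in>UNIV. \<Sum>y\<in>UNIV. cnj (v x) * \<psi> x y * v y)
      = (\<Sum>x\<in>UNIV. cnj (v x) * (\<Sum>y\<in>UNIV. \<psi> x y * v y))"
    by (simp add: sum_distrib_left mult.assoc)
  also have "\<dots> = (\<Sum>x\<in>UNIV. (\<psi> x a + c * \<psi> x b) * (of_bool (x = a) + cnj c * of_bool (x = b)))"
    unfolding cnj_v by (simp only: v_def sum_two_point mult.commute)
  also have "\<dots> = \<psi> a a + c * \<psi> a b + cnj c * (\<psi> b a + c * \<psi> b b)"
    by (rule sum_two_point)
  finally show ?thesis .
qed

lemma qstate_hermitian:
  assumes "qstate \<psi>"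
  shows "qhermitian \<psi>"
proof -
  have form_real: "Im (\<Sum>x\<in>UNIV. \<Sum>y\<in>UNIV. cnj (v x) * \<psi> x y * v y) = 0" for v
    using assms by (simp add: qstate_def)
  have form: "Im (\<psi> a a + c * \<psi> a b + cnj c * (\<psi> b a + c * \<psi> b b)) = 0" for a b c
    using form_real[of "\<lambda>z. of_bool (z = a) + c * of_bool (z = b)"] by (simp only: qform_two_point)
  have "cnj (\<psi> b a) = \<psi> a b" for a b
    using form[of a 1 b] form[of a \<i> b] form[of a 0 a] form[of b 0 b]
    by (simp add: complex_eq_iff)
  then show ?thesis
    by (simp add: qhermitian_def qadj_def fun_eq_iff)
qed

lemma qadj_qtensor: "qadj (qtensor P Q) = qtensor (qadj P) (qadj Q)"
  by (simp add: fun_eq_iff qadj_def qtensor_def)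

lemma qadj_qadj: "qadj (qadj X) = X"
  by (simp add: qadj_def)

lemma qtr_qmult_qadj:
  fixes \<psi> :: "'a::finite qop"
  assumes "qhermitian \<psi>"
  shows "qtr (qmult (qadj X) \<psi>) = cnj (qtr (qmult X \<psi>))"
proof -
  have "cnj (\<psi> i k) = \<psi> k i" for i k
    using assms by (metis qadj_def qhermitian_def)
  then show ?thesis
    by (simp add: qtr_def qmult_def qadj_def cnj_sum) (rule sum.swap)
qed

lemma qcorr_qadj:
  assumes "qhermitian \<psi>"
  shows "qcorr \<psi> (qadj P) (qadj Q) = cnj (qcorr \<psi> P Q)"
  using qtr_qmult_qadj[OF assms, of "qtensor (qadj P) Q"]
  by (simp add: qcorr_def qadj_qtensor qadj_qadj)

(* The Hermitian parts in X = qre X + \<i> * qim X. *)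
definition qre :: "'a qop \<Rightarrow> 'a qop" where
  "qre X = (\<lambda>i k. (X i k + cnj (X k i)) / 2)"

definition qim :: "'a qop \<Rightarrow> 'a qop" where
  "qim X = (\<lambda>i k. \<i> * (cnj (X k i) - X i k) / 2)"

lemma qhermitian_qre: "qhermitian (qre X)"
  by (simp add: qhermitian_def qadj_def qre_def fun_eq_iff add.commute)

lemma qhermitian_qim: "qhermitian (qim X)"
  by (auto simp: qhermitian_def qadj_def qim_def fun_eq_iff complex_eq_iff field_simps)

lemma qtr_qre: "qtr X = 0 \<Longrightarrow> qtr (qre X) = 0"
  by (simp add: qtr_def qre_def sum.distrib cnj_sum[symmetric] flip: sum_divide_distrib)

lemma qtr_qim: "qtr X = 0 \<Longrightarrow> qtr (qim X) = 0"
  by (simp add: qtr_def qim_def sum_subtractf cnj_sum[symmetric]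
      flip: sum_divide_distrib sum_distrib_left)

lemma qnorm2_qre_qim:
  fixes X :: "'a::finite qop"
  shows "(qnorm2 (qre X))\<^sup>2 + (qnorm2 (qim X))\<^sup>2 = (qnorm2 X)\<^sup>2"
proof -
  have entry: "(cmod (qre X i k))\<^sup>2 + (cmod (qim X i k))\<^sup>2 = ((cmod (X i k))\<^sup>2 + (cmod (X k i))\<^sup>2) / 2" for i k
    unfolding qre_def qim_def cmod_power2 by (simp add: power2_eq_square field_simps)
  have transpose: "(\<Sum>(i, k)\<in>UNIV. (cmod (X k i))\<^sup>2) = (\<Sum>(i, k)\<in>UNIV. (cmod (X i k))\<^sup>2)"
    by (simp add: sum_UNIV_pair) (rule sum.swap)
  have "(qnorm2 (qre X))\<^sup>2 + (qnorm2 (qim X))\<^sup>2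
      = (\<Sum>(i, k)\<in>UNIV. ((cmod (X i k))\<^sup>2 + (cmod (X k i))\<^sup>2) / 2) / CARD('a)"
    by (simp add: qnorm2_squared entry add_divide_distrib[symmetric] case_prod_unfold
        flip: sum.distrib)
  also have "\<dots> = (qnorm2 X)\<^sup>2"
    using transpose by (simp add: qnorm2_squared sum.distrib case_prod_unfold flip: sum_divide_distrib)
  finally show ?thesis .
qed

lemma qcorr_lincomb:
  "a * qcorr \<psi> P Q + b * qcorr \<psi> P' Q' =
    (\<Sum>k\<in>UNIV. \<Sum>l\<in>UNIV. \<Sum>i\<in>UNIV. \<Sum>j\<in>UNIV.
      (a * cnj (P i k) * Q l j + b * cnj (P' i k) * Q' l j) * \<psi> (i, j) (k, l))"
  by (simp add: qcorr_expand sum_distrib_left algebra_simps flip: sum.distrib)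

lemma qcorr_add_qadj:
  "qcorr \<psi> P Q + qcorr \<psi> (qadj P) (qadj Q)
    = 2 * qcorr \<psi> (qre P) (qre Q) + 2 * qcorr \<psi> (qim P) (qim Q)"
proof -
  have "cnj p * q + cnj (cnj p') * cnj q'
      = 2 * cnj ((p + cnj p') / 2) * ((q + cnj q') / 2) + 2 * cnj (\<i> * (cnj p' - p) / 2) * (\<i> * (cnj q' - q) / 2)"
    for p p' q q' :: complex
    by (simp add: complex_eq_iff field_simps)
  then show ?thesis
    using qcorr_lincomb[of 1 \<psi> P Q 1 "qadj P" "qadj Q"] qcorr_lincomb[of 2 \<psi> "qre P" "qre Q" 2 "qim P" "qim Q"]
    by (simp only: qadj_def qre_def qim_def mult_1)
qed

lemma Re_qcorr_qre_qim:
  assumes "qhermitian \<psi>"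
  shows "Re (qcorr \<psi> P Q) = Re (qcorr \<psi> (qre P) (qre Q)) + Re (qcorr \<psi> (qim P) (qim Q))"
  using arg_cong[OF qcorr_add_qadj[of \<psi> P Q], of Re] by (simp add: qcorr_qadj[OF assms])

lemma qnorm2_markov_attains_max:
  fixes \<psi> :: "('a::finite \<times> 'b::finite) qop"
  assumes "CARD('b) \<ge> 2"
  shows "\<exists>Q\<^sub>0. qtr Q\<^sub>0 = 0 \<and> qnorm2 Q\<^sub>0 = 1 \<and>
           (\<forall>Q. qtr Q = 0 \<and> qnorm2 Q = 1 \<longrightarrow> qnorm2 (markov \<psi> Q) \<le> qnorm2 (markov \<psi> Q\<^sub>0))"
proof -
  define qop_of :: "complex^('b \<times> 'b) \<Rightarrow> 'b qop" where "qop_of v = (\<lambda>j l. v $ (j, l))" for v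
  define K where "K = {v. qtr (qop_of v) = 0 \<and> qnorm2 (qop_of v) = 1}"
  have qop_of_inverse: "qop_of (\<chi> p. Q (fst p) (snd p)) = Q" for Q
    by (simp add: qop_of_def)
  have "qnorm2 (qop_of v) = norm v / sqrt CARD('b)" for v
    by (simp add: qnorm2_eq_L2_set qop_of_def norm_vec_def case_prod_unfold)
  then have "K \<subseteq> cball 0 (sqrt CARD('b))"
    by (auto simp: K_def)
  moreover have "closed K"
    unfolding K_def qtr_def qnorm2_def qinner_expand qop_of_def
    by (intro closed_Collect_conj closed_Collect_eq continuous_intros) auto
  ultimately have "compact K"
    by (metis compact_cball compact_Int_closed inf.absorb_iff2)
  moreover have "K \<noteq> {}"
  proof -
    obtain P :: "'b qop" where "qtr P = 0" "qnorm2 P = 1"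
      using exists_traceless_hermitian_unit[OF assms] by blast
    then have "(\<chi> p. P (fst p) (snd p)) \<in> K"
      by (simp add: K_def qop_of_inverse)
    then show ?thesis
      by blast
  qed
  moreover have "continuous_on K (\<lambda>v. qnorm2 (markov \<psi> (qop_of v)))"
    unfolding qnorm2_def qinner_expand markov_def qscale_def ptrace_B_def qmult_qtensor_qid qop_of_def
    by (intro continuous_intros) auto
  ultimately obtain v\<^sub>0 where
    "v\<^sub>0 \<in> K" "\<forall>v\<in>K. qnorm2 (markov \<psi> (qop_of v)) \<le> qnorm2 (markov \<psi> (qop_of v\<^sub>0))"
    using continuous_attains_sup by blast
  then show ?thesis
    by (metis (mono_tags, lifting) K_def mem_Collect_eq qop_of_inverse)
qed

lemma qcorr_le_qnorm2_markov: "cmod (qcorr \<psi> P Q) \<le> qnorm2 P * qnorm2 (markov \<psi> Q)"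
  unfolding qcorr_eq_qinner_markov by (rule qinner_cauchy_schwarz)

lemma qcorr_qnormalize_markov: "cmod (qcorr \<psi> (qnormalize (markov \<psi> Q)) Q) = qnorm2 (markov \<psi> Q)"
  by (simp add: qcorr_eq_qinner_markov qinner_qnormalize_self qnorm2_nonneg)

lemma is_max_qcorr_unit:
  "is_max (qnorm2 (markov \<psi> Q)) {cmod (qcorr \<psi> P Q) | P. qnorm2 P = 1}"
proof -
  obtain P where "qnorm2 P = 1" "cmod (qcorr \<psi> P Q) = qnorm2 (markov \<psi> Q)"
  proof (cases "markov \<psi> Q = (\<lambda>_ _. 0)")
    case True
    then show ?thesis
      using that[of qid] by (simp add: qnorm2_qid qcorr_eq_qinner_markov qinner_expand)
  next
    case False
    then show ?thesis
      using that qnorm2_qnormalize qcorr_qnormalize_markov by blast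
  qed
  moreover have "y \<le> qnorm2 (markov \<psi> Q)" if "y \<in> {cmod (qcorr \<psi> P Q) | P. qnorm2 P = 1}" for y
  proof -
    from that obtain P' where "y = cmod (qcorr \<psi> P' Q)" "qnorm2 P' = 1"
      by blast
    then show ?thesis
      using qcorr_le_qnorm2_markov[of \<psi> P' Q] by simp
  qed
  ultimately show ?thesis
    unfolding is_max_def by (metis (mono_tags, lifting) mem_Collect_eq)
qed

lemma qcorr_le_of_markov_le:
  assumes markov_le: "\<And>Q. qtr Q = 0 \<Longrightarrow> qnorm2 Q = 1 \<Longrightarrow> qnorm2 (markov \<psi> Q) \<le> \<rho>"
    and "qtr Q = 0"
  shows "cmod (qcorr \<psi> P Q) \<le> \<rho> * qnorm2 P * qnorm2 Q"
proof -
  have "qnorm2 (markov \<psi> Q) \<le> \<rho> * qnorm2 Q"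
  proof (cases "Q = (\<lambda>_ _. 0)")
    case True
    then show ?thesis
      using markov_qscale[of \<psi> 0 Q] by (simp add: qscale_def qnorm2_eq_0_iff)
  next
    case False
    then have "qnorm2 (markov \<psi> (qnormalize Q)) \<le> \<rho>"
      using \<open>qtr Q = 0\<close> by (intro markov_le) (simp_all add: qtr_qscale qnorm2_qnormalize)
    then show ?thesis
      using False by (simp add: markov_qscale qnorm2_qscale norm_divide qnorm2_pos_iff
          qnorm2_nonneg divide_le_eq mult.commute)
  qed
  then have "qnorm2 P * qnorm2 (markov \<psi> Q) \<le> qnorm2 P * (\<rho> * qnorm2 Q)"
    by (simp add: mult_left_mono qnorm2_nonneg)
  then show ?thesis
    using qcorr_le_qnorm2_markov[of \<psi> P Q] by (simp add: mult_ac)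
qed

lemma exists_traceless_qcorr_eq_markov:
  fixes \<psi> :: "('a::finite \<times> 'b::finite) qop"
  assumes "CARD('a) \<ge> 2" and "ptrace_A \<psi> = qscale c qid" and "qtr Q = 0"
  shows "\<exists>P. qtr P = 0 \<and> qnorm2 P = 1 \<and> cmod (qcorr \<psi> P Q) = qnorm2 (markov \<psi> Q)"
proof (cases "markov \<psi> Q = (\<lambda>_ _. 0)")
  case True
  obtain P :: "'a qop" where "qtr P = 0" "qnorm2 P = 1"
    using exists_traceless_hermitian_unit[OF assms(1)] by blast
  with True show ?thesis
    by (auto simp: qcorr_eq_qinner_markov qinner_expand qnorm2_eq_0_iff)
next
  case False
  then show ?thesis
    using qtr_markov_eq_0[OF assms(2,3)] qnorm2_qnormalize qcorr_qnormalize_markov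
    by (metis mult_zero_right qtr_qscale)
qed

lemma maxcorr_eqI:
  assumes "\<And>P Q. qtr P = 0 \<Longrightarrow> qtr Q = 0 \<Longrightarrow> qnorm2 P = 1 \<Longrightarrow> qnorm2 Q = 1
      \<Longrightarrow> cmod (qcorr \<psi> P Q) \<le> \<rho>"
    and "qtr P\<^sub>0 = 0" "qtr Q\<^sub>0 = 0" "qnorm2 P\<^sub>0 = 1" "qnorm2 Q\<^sub>0 = 1" "cmod (qcorr \<psi> P\<^sub>0 Q\<^sub>0) = \<rho>"
  shows "maxcorr \<psi> = \<rho>"
  unfolding maxcorr_def
proof (rule cSup_eq_maximum)
  show "\<rho> \<in> {cmod (qcorr \<psi> P Q) | P Q. qtr P = 0 \<and> qtr Q = 0 \<and> qnorm2 P = 1 \<and> qnorm2 Q = 1}"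
    using assms(2-6) by blast
  show "x \<le> \<rho>" if "x \<in> {cmod (qcorr \<psi> P Q) | P Q. qtr P = 0 \<and> qtr Q = 0 \<and> qnorm2 P = 1 \<and> qnorm2 Q = 1}" for x
    using that assms(1) by fastforce
qed

lemma bound_attained_by_one_term:
  fixes \<rho> a1 a2 b1 b2 c1 c2 :: real
  assumes "\<rho> > 0" and "\<rho> \<le> c1 + c2" and c1: "c1 \<le> \<rho> * (a1 * b1)" and c2: "c2 \<le> \<rho> * (a2 * b2)"
    and "a1\<^sup>2 + a2\<^sup>2 = 1" "b1\<^sup>2 + b2\<^sup>2 = 1" and nonneg: "a1 \<ge> 0" "a2 \<ge> 0" "b1 \<ge> 0" "b2 \<ge> 0"
  shows "a1 > 0 \<and> b1 > 0 \<and> c1 = \<rho> * (a1 * b1) \<or> a2 > 0 \<and> b2 > 0 \<and> c2 = \<rho> * (a2 * b2)"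
proof -
  have "a1 * b1 + a2 * b2 \<le> 1"
    using assms(5,6) sum_squares_ge_zero[of "a1 - b1" "a2 - b2"] by (simp add: power2_eq_square algebra_simps)
  moreover have "\<rho> * 1 \<le> \<rho> * (a1 * b1 + a2 * b2)"
    using \<open>\<rho> \<le> c1 + c2\<close> c1 c2 by (simp add: distrib_left)
  ultimately have sum_eq: "a1 * b1 + a2 * b2 = 1"
    using \<open>\<rho> > 0\<close> by (simp add: mult_le_cancel_left_pos)
  then have "\<rho> * (a1 * b1) + \<rho> * (a2 * b2) = \<rho>"
    by (metis distrib_left mult_1_right)
  then have "c1 = \<rho> * (a1 * b1)" "c2 = \<rho> * (a2 * b2)"
    using c1 c2 \<open>\<rho> \<le> c1 + c2\<close> by linarith+
  moreover have "a1 * b1 > 0 \<or> a2 * b2 > 0"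
    using sum_eq mult_nonneg_nonneg[OF nonneg(1,3)] mult_nonneg_nonneg[OF nonneg(2,4)] by linarith
  ultimately show ?thesis
    using nonneg by (auto simp: zero_less_mult_iff)
qed

lemma exists_hermitian_optimizer_of_Re:
  fixes \<psi> :: "('a::finite \<times> 'b::finite) qop"
  assumes "qhermitian \<psi>" and "\<rho> > 0"
    and bound: "\<And>P Q. qtr P = 0 \<Longrightarrow> qtr Q = 0 \<Longrightarrow> cmod (qcorr \<psi> P Q) \<le> \<rho> * qnorm2 P * qnorm2 Q"
    and P: "qtr P = 0" "qnorm2 P = 1" and Q: "qtr Q = 0" "qnorm2 Q = 1"
    and "Re (qcorr \<psi> P Q) = \<rho>"
  shows "\<exists>P Q. qhermitian P \<and> qhermitian Q \<and> qtr P = 0 \<and> qtr Q = 0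
           \<and> qnorm2 P = 1 \<and> qnorm2 Q = 1 \<and> cmod (qcorr \<psi> P Q) = \<rho>"
proof -
  have attained: "\<exists>P Q. qhermitian P \<and> qhermitian Q \<and> qtr P = 0 \<and> qtr Q = 0
           \<and> qnorm2 P = 1 \<and> qnorm2 Q = 1 \<and> cmod (qcorr \<psi> P Q) = \<rho>"
    if "qhermitian H" "qhermitian K" "qtr H = 0" "qtr K = 0" "qnorm2 H > 0" "qnorm2 K > 0"
      and "cmod (qcorr \<psi> H K) = \<rho> * (qnorm2 H * qnorm2 K)"
    for H :: "'a qop" and K :: "'b qop"
    using that by (intro exI[of _ "qnormalize H"] exI[of _ "qnormalize K"])
      (simp add: qhermitian_qnormalize qtr_qscale qnorm2_qnormalize cmod_qcorr_qnormalize
        qnorm2_pos_iff qnorm2_eq_0_iff)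
  have "\<rho> \<le> cmod (qcorr \<psi> (qre P) (qre Q)) + cmod (qcorr \<psi> (qim P) (qim Q))"
    using Re_qcorr_qre_qim[OF assms(1), of P Q] \<open>Re (qcorr \<psi> P Q) = \<rho>\<close>
      complex_Re_le_cmod[of "qcorr \<psi> (qre P) (qre Q)"] complex_Re_le_cmod[of "qcorr \<psi> (qim P) (qim Q)"]
    by linarith
  moreover have "cmod (qcorr \<psi> (qre P) (qre Q)) \<le> \<rho> * (qnorm2 (qre P) * qnorm2 (qre Q))"
    and "cmod (qcorr \<psi> (qim P) (qim Q)) \<le> \<rho> * (qnorm2 (qim P) * qnorm2 (qim Q))"
    using bound P Q by (simp_all add: qtr_qre qtr_qim mult.assoc)
  moreover have "(qnorm2 (qre P))\<^sup>2 + (qnorm2 (qim P))\<^sup>2 = 1" "(qnorm2 (qre Q))\<^sup>2 + (qnorm2 (qim Q))\<^sup>2 = 1"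
    using qnorm2_qre_qim[of P] qnorm2_qre_qim[of Q] P Q by simp_all
  ultimately have
    "qnorm2 (qre P) > 0 \<and> qnorm2 (qre Q) > 0 \<and>
       cmod (qcorr \<psi> (qre P) (qre Q)) = \<rho> * (qnorm2 (qre P) * qnorm2 (qre Q)) \<or>
     qnorm2 (qim P) > 0 \<and> qnorm2 (qim Q) > 0 \<and>
       cmod (qcorr \<psi> (qim P) (qim Q)) = \<rho> * (qnorm2 (qim P) * qnorm2 (qim Q))"
    by (rule bound_attained_by_one_term[OF \<open>\<rho> > 0\<close> _ _ _ _ _ qnorm2_nonneg qnorm2_nonneg
          qnorm2_nonneg qnorm2_nonneg])
  then show ?thesis
    using P Q attained[of "qre P" "qre Q"] attained[of "qim P" "qim Q"]
    by (auto simp: qhermitian_qre qhermitian_qim qtr_qre qtr_qim)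
qed

lemma exists_hermitian_optimizer:
  fixes \<psi> :: "('a::finite \<times> 'b::finite) qop"
  assumes "qhermitian \<psi>" and "CARD('a) \<ge> 2" and "CARD('b) \<ge> 2"
    and bound: "\<And>P Q. qtr P = 0 \<Longrightarrow> qtr Q = 0 \<Longrightarrow> cmod (qcorr \<psi> P Q) \<le> \<rho> * qnorm2 P * qnorm2 Q"
    and P: "qtr P = 0" "qnorm2 P = 1" and Q: "qtr Q = 0" "qnorm2 Q = 1"
    and "cmod (qcorr \<psi> P Q) = \<rho>"
  shows "\<exists>P Q. qhermitian P \<and> qhermitian Q \<and> qtr P = 0 \<and> qtr Q = 0
           \<and> qnorm2 P = 1 \<and> qnorm2 Q = 1 \<and> cmod (qcorr \<psi> P Q) = \<rho>"
proof (cases "\<rho> = 0")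
  case True
  obtain P' :: "'a qop" and Q' :: "'b qop"
    where "qhermitian P'" "qtr P' = 0" "qnorm2 P' = 1" "qhermitian Q'" "qtr Q' = 0" "qnorm2 Q' = 1"
    using exists_traceless_hermitian_unit[OF assms(2)] exists_traceless_hermitian_unit[OF assms(3)] by blast
  with True bound[of P' Q'] show ?thesis
    by auto
next
  case False
  with \<open>cmod (qcorr \<psi> P Q) = \<rho>\<close> have "\<rho> > 0"
    by auto
  define Q' where "Q' = qscale (cnj (qcorr \<psi> P Q) / \<rho>) Q"
  have "qcorr \<psi> P Q' = \<rho>"
    using \<open>cmod (qcorr \<psi> P Q) = \<rho>\<close> False
    by (simp add: Q'_def qcorr_qscale_right cnj_mult_self power2_eq_square)
  moreover have "qtr Q' = 0" "qnorm2 Q' = 1"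
    using Q \<open>cmod (qcorr \<psi> P Q) = \<rho>\<close> \<open>\<rho> > 0\<close>
    by (simp_all add: Q'_def qtr_qscale qnorm2_qscale norm_divide)
  ultimately show ?thesis
    using exists_hermitian_optimizer_of_Re[OF assms(1) \<open>\<rho> > 0\<close> bound P] by simp
qed

theorem proposition3p10:
  fixes \<psi> :: "('a::finite \<times> 'b::finite) qop"
  assumes "CARD('a) \<ge> 2" and "CARD('b) \<ge> 2"
    and "qstate \<psi>"
    and "ptrace_B \<psi> = qscale (1 / of_nat CARD('a)) qid"
    and "ptrace_A \<psi> = qscale (1 / of_nat CARD('b)) qid"
  shows "(\<forall>Q :: 'b qop.
            is_max (qnorm2 (markov \<psi> Q)) {cmod (qcorr \<psi> P Q) | P. qnorm2 P = 1}
          \<and> (markov \<psi> Q \<noteq> (\<lambda>_ _. 0) \<longrightarrow>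
               qnorm2 (qscale (1 / complex_of_real (qnorm2 (markov \<psi> Q))) (markov \<psi> Q)) = 1
             \<and> cmod (qcorr \<psi> (qscale (1 / complex_of_real (qnorm2 (markov \<psi> Q))) (markov \<psi> Q)) Q)
                 = qnorm2 (markov \<psi> Q)))
       \<and> is_max (maxcorr \<psi>) {qnorm2 (markov \<psi> Q) | Q. qtr Q = 0 \<and> qnorm2 Q = 1}
       \<and> (\<exists>P Q. qhermitian P \<and> qhermitian Q \<and> qtr P = 0 \<and> qtr Q = 0
                \<and> qnorm2 P = 1 \<and> qnorm2 Q = 1 \<and> cmod (qcorr \<psi> P Q) = maxcorr \<psi>)"
proof -
  obtain Q\<^sub>0 where Q\<^sub>0: "qtr Q\<^sub>0 = 0" "qnorm2 Q\<^sub>0 = 1"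
    and Q\<^sub>0_max: "\<And>Q. qtr Q = 0 \<Longrightarrow> qnorm2 Q = 1 \<Longrightarrow> qnorm2 (markov \<psi> Q) \<le> qnorm2 (markov \<psi> Q\<^sub>0)"
    using qnorm2_markov_attains_max[OF assms(2)] by blast
  define \<rho> where "\<rho> = qnorm2 (markov \<psi> Q\<^sub>0)"
  have bound: "cmod (qcorr \<psi> P Q) \<le> \<rho> * qnorm2 P * qnorm2 Q" if "qtr P = 0" "qtr Q = 0" for P Q
    unfolding \<rho>_def using Q\<^sub>0_max that(2) by (rule qcorr_le_of_markov_le)
  obtain P\<^sub>0 where P\<^sub>0: "qtr P\<^sub>0 = 0" "qnorm2 P\<^sub>0 = 1" "cmod (qcorr \<psi> P\<^sub>0 Q\<^sub>0) = \<rho>"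
    using exists_traceless_qcorr_eq_markov[OF assms(1,5) Q\<^sub>0(1)] unfolding \<rho>_def by blast
  have "maxcorr \<psi> = \<rho>"
  proof (rule maxcorr_eqI[OF _ P\<^sub>0(1) Q\<^sub>0(1) P\<^sub>0(2) Q\<^sub>0(2) P\<^sub>0(3)])
    show "cmod (qcorr \<psi> P Q) \<le> \<rho>" if "qtr P = 0" "qtr Q = 0" "qnorm2 P = 1" "qnorm2 Q = 1" for P Q
      using bound[OF that(1,2)] that(3,4) by simp
  qed
  moreover have "is_max \<rho> {qnorm2 (markov \<psi> Q) | Q. qtr Q = 0 \<and> qnorm2 Q = 1}"
    unfolding is_max_def \<rho>_def using Q\<^sub>0 Q\<^sub>0_max by blast
  moreover note exists_hermitian_optimizer[OF qstate_hermitian[OF assms(3)] assms(1,2) bound P\<^sub>0(1,2) Q\<^sub>0 P\<^sub>0(3)]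
  ultimately show ?thesis
    using is_max_qcorr_unit qnorm2_qnormalize qcorr_qnormalize_markov by auto
qed

end
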